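(* Let $G$ be a locally compact group, $O$ a neighborhood of the unit, $K\subseteq G$ compact, and $F\subseteq G$ a finite set with $K\subseteq FO$ and $|F|=(K:O)$. Then for every $S\subseteq F$, $(SO:O)=|S|$.
   Context: For $X\subseteq G$ and a neighborhood $O$ of the unit, $(X:O)$ denotes the minimal $n$ such that there is a set $F'\subseteq G$ with $|F'|=n$ and $X\subseteq F'O$, where $F'O=\{fo: f\in F', o\in O\}$. *)

theory Defs
  imports "HOL-Analysis.Analysis" "HOL-Algebra.Algebra"
begin

definition topological_group :: "('a, 'b) monoid_scheme \<Rightarrow> 'a topology \<Rightarrow> bool" where
  "topological_group G T \<longleftrightarrow> group G \<and> topspace T = carrier G \<and>
     continuous_map (prod_topology T T) T (\<lambda>(x, y). x \<otimes>\<^bsub>G\<^esub> y) \<and>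
     continuous_map T T (\<lambda>x. inv\<^bsub>G\<^esub> x)"

definition locally_compact_group :: "('a, 'b) monoid_scheme \<Rightarrow> 'a topology \<Rightarrow> bool" where
  "locally_compact_group G T \<longleftrightarrow> topological_group G T \<and> locally_compact_space T"

definition unit_nbhd :: "('a, 'b) monoid_scheme \<Rightarrow> 'a topology \<Rightarrow> 'a set \<Rightarrow> bool" where
  "unit_nbhd G T V \<longleftrightarrow> V \<subseteq> carrier G \<and> (\<exists>U. openin T U \<and> \<one>\<^bsub>G\<^esub> \<in> U \<and> U \<subseteq> V)"

definition cov_num :: "('a, 'b) monoid_scheme \<Rightarrow> 'a set \<Rightarrow> 'a set \<Rightarrow> nat" where
  "cov_num G Y V = Least (\<lambda>n::nat. \<exists>F'. F' \<subseteq> carrier G \<and> finite F' \<and> card F' = n \<and>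
                                  Y \<subseteq> set_mult G F' V)"

end

theory Submission
  imports Defs
begin

(* If SV could be covered by fewer than |S| translates F'V, then (F - S) \<union> F' would cover
   FV \<supseteq> K by fewer than |F| = (K:V) translates. *)

lemma set_mult_Un_left: "set_mult G (A \<union> B) V = set_mult G A V \<union> set_mult G B V"
  unfolding set_mult_def by blast

lemma cov_num_le_card:
  assumes "F \<subseteq> carrier G" "finite F" "Y \<subseteq> set_mult G F V"
  shows "cov_num G Y V \<le> card F"
  unfolding cov_num_def by (rule Least_le) (use assms in blast)

lemma cov_num_attained:
  assumes "F \<subseteq> carrier G" "finite F" "Y \<subseteq> set_mult G F V"
  obtains F' where "F' \<subseteq> carrier G" "finite F'" "card F' = cov_num G Y V"
    "Y \<subseteq> set_mult G F' V"
proof -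
  have "\<exists>F'. F' \<subseteq> carrier G \<and> finite F' \<and> card F' = cov_num G Y V \<and> Y \<subseteq> set_mult G F' V"
    unfolding cov_num_def by (rule LeastI) (use assms in blast)
  then show ?thesis using that by blast
qed

lemma cov_num_set_mult_subset_of_minimal_cover:
  assumes F: "F \<subseteq> carrier G" "finite F"
    and K_cover: "K \<subseteq> set_mult G F V"
    and minimal: "card F = cov_num G K V"
    and "S \<subseteq> F"
  shows "cov_num G (set_mult G S V) V = card S"
proof (rule antisym)
  have S: "S \<subseteq> carrier G" "finite S"
    using \<open>S \<subseteq> F\<close> F finite_subset by blast+
  then show "cov_num G (set_mult G S V) V \<le> card S"
    by (rule cov_num_le_card) simp
  obtain F' where F': "F' \<subseteq> carrier G" "finite F'"
      "card F' = cov_num G (set_mult G S V) V" "set_mult G S V \<subseteq> set_mult G F' V"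
    using cov_num_attained[OF S order_refl] .
  have "set_mult G F V = set_mult G (F - S) V \<union> set_mult G S V"
    using \<open>S \<subseteq> F\<close> set_mult_Un_left[of G "F - S" S V] by (simp add: Un_absorb2)
  also have "\<dots> \<subseteq> set_mult G ((F - S) \<union> F') V"
    using F'(4) by (auto simp: set_mult_Un_left)
  finally have K_new_cover: "K \<subseteq> set_mult G ((F - S) \<union> F') V"
    using K_cover by blast
  have "card F \<le> card ((F - S) \<union> F')"
    unfolding minimal using F F'(1,2) K_new_cover by (intro cov_num_le_card) auto
  also have "\<dots> \<le> card (F - S) + card F'"
    by (rule card_Un_le)
  also have "card (F - S) = card F - card S"
    using \<open>S \<subseteq> F\<close> S by (simp add: card_Diff_subset)
  finally show "card S \<le> cov_num G (set_mult G S V) V"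
    using card_mono[OF F(2) \<open>S \<subseteq> F\<close>] F'(3) by linarith
qed

theorem proposition6:
  fixes G :: "('a, 'b) monoid_scheme" and T :: "'a topology"
    and V K F :: "'a set"
  assumes "locally_compact_group G T"
    and "unit_nbhd G T V"
    and "compactin T K"
    and "F \<subseteq> carrier G" and "finite F"
    and "K \<subseteq> set_mult G F V"
    and "card F = cov_num G K V"
  shows "\<forall>S. S \<subseteq> F \<longrightarrow> cov_num G (set_mult G S V) V = card S"
  using cov_num_set_mult_subset_of_minimal_cover[OF assms(4-7)] by blast

end
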